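(* Let $n\ge 2$ and $v\in A_n$. Then $$\ell_{T(A_n)}(v)=\begin{cases} n-\mathrm{cyc}(v) & \text{if } 1,2 \text{ are in different cycles of } v,\\ n-\mathrm{cyc}(v)-1 & \text{if } 1,2 \text{ are in the same cycle of } v.\end{cases}$$
   Context: $A_n$ is the alternating group on $\{1,\dots,n\}$, $T(A_n)=\{(1\,2)(i\,j)\mid 1\le i<j\le n\}$, and $\ell_{T(A_n)}(v)=\min\{k\ge 0\mid v=t_1\cdots t_k,\ t_i\in T(A_n)\}$. $\mathrm{cyc}(v)$ is the number of cycles of $v$ in its disjoint cycle decomposition, fixed points counted. *)

theory Defs
  imports "HOL-Combinatorics.Combinatorics"
begin

definition alt_group :: "nat \<Rightarrow> (nat \<Rightarrow> nat) set" where
  "alt_group n = {p. p permutes {1..n} \<and> evenperm p}"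

definition T_alt :: "nat \<Rightarrow> (nat \<Rightarrow> nat) set" where
  "T_alt n = {transpose 1 2 \<circ> transpose i j | i j. 1 \<le> i \<and> i < j \<and> j \<le> n}"

definition len_T :: "nat \<Rightarrow> (nat \<Rightarrow> nat) \<Rightarrow> nat" where
  "len_T n v = (LEAST k. \<exists>ts. length ts = k \<and> set ts \<subseteq> T_alt n \<and> v = foldr (\<circ>) ts id)"

(* number of cycles of v on {1..n}, fixed points counted *)
definition cyc :: "nat \<Rightarrow> (nat \<Rightarrow> nat) \<Rightarrow> nat" where
  "cyc n v = card (orbit v ` {1..n})"

end

(* Multiplying a permutation by a transposition (a b) merges the cycles of a and b or
   splits their common cycle, so the number of cycles changes by exactly one.
   Hence the weight  n - cyc v - [1, 2 in one cycle of v]  grows by at most one under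
   multiplication with a generator (1 2)(i j): if both transpositions merge cycles, the
   second one joins 1 and 2, which therefore lay in different cycles before.
   Conversely, an even v \<noteq> id moves some x \<notin> {1, 2}; writing v = (1 2) w', splitting x off
   its w'-cycle leaves the position of 1 and 2 unchanged and lowers the weight by one. *)

theory Submission imports Defs begin

lemma permutation_orbit_sym:
  "permutation p \<Longrightarrow> y \<in> orbit p x \<Longrightarrow> x \<in> orbit p y"
  by (meson orbit_swap permutation_self_in_orbit)

lemma permutation_orbit_eq:
  "permutation p \<Longrightarrow> y \<in> orbit p x \<Longrightarrow> orbit p y = orbit p x"
  by (meson cyclic_on_orbit' orbit_cyclic_eq3)

lemma not_in_orbit_transpose_comp:
  assumes "permutation p" "a \<noteq> b" "b \<in> orbit p a"
  shows "b \<notin> orbit (transpose a b \<circ> p) a"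
proof -
  let ?q = "transpose a b \<circ> p"
  define k where "k = funpow_dist p a b"
  have pk: "(p ^^ k) a = b" using funpow_dist_prop[OF assms(3)] k_def by simp
  have before_b: "(p ^^ j) a \<noteq> b" if "j < k" for j
    using funpow_dist_least that k_def by metis
  have "0 < k" using pk assms(2) by (cases k) auto
  define C where "C = {(p ^^ j) a | j. j < k}"
  \<comment> \<open>the arc of the cycle from a up to b is closed under q, which sends its last point back to a\<close>
  have q_closed: "?q ((p ^^ j) a) \<in> C" if j: "j < k" for j
  proof (cases "Suc j = k")
    case True
    then have "?q ((p ^^ j) a) = a" using pk by auto
    then show ?thesis using \<open>0 < k\<close> unfolding C_def by (auto intro!: exI[of _ 0])
  next
    case False
    then have j1: "Suc j < k" using j by simp
    have "(p ^^ Suc j) a \<noteq> a"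
    proof
      assume "(p ^^ Suc j) a = a"
      then have "(p ^^ (k - Suc j)) a = b"
        using pk j1 funpow_add[of "k - Suc j" "Suc j" p] by simp
      then show False using before_b j1 by simp
    qed
    then have "?q ((p ^^ j) a) = (p ^^ Suc j) a" using before_b[OF j1] by simp
    then show ?thesis using j1 unfolding C_def by blast
  qed
  have "orbit ?q a \<subseteq> C"
  proof
    fix y assume "y \<in> orbit ?q a"
    then show "y \<in> C"
      by induct (use q_closed[of 0] \<open>0 < k\<close> q_closed in \<open>auto simp: C_def\<close>)
  qed
  then show ?thesis using before_b unfolding C_def by blast
qed

lemma insert_orbit_subset_orbit_transpose_comp:
  assumes "permutation p" "b \<notin> orbit p a"
  shows "insert b (orbit p a) \<subseteq> orbit (transpose a b \<circ> p) a"
proof -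
  let ?q = "transpose a b \<circ> p"
  have a_in: "a \<in> orbit p a" using assms(1) by (rule permutation_self_in_orbit)
  define m where "m = funpow_dist1 p a a"
  have "(p ^^ m) a = a" using funpow_dist1_prop[OF a_in] m_def by simp
  moreover have "0 < m" using m_def by simp
  then obtain m' where m': "m = Suc m'" by (cases m) auto
  \<comment> \<open>q agrees with p along the p-cycle of a until the cycle returns to a\<close>
  have on_arc: "(p ^^ k) a \<in> orbit ?q a" if "k < m" for k
    using that
  proof (induct k)
    case 0
    have "permutation ?q" using assms(1) by (simp add: permutation_compose permutation_swap_id)
    then show ?case unfolding funpow_0 by (rule permutation_self_in_orbit)
  next
    case (Suc k)
    have "(p ^^ Suc k) a \<noteq> b"
      using funpow_in_orbit[OF a_in, of "Suc k"] assms(2) by metis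
    moreover have "(p ^^ Suc k) a \<noteq> a"
      using funpow_dist1_least[of "Suc k" p a a] Suc.prems m_def by simp
    ultimately have "?q ((p ^^ k) a) = (p ^^ Suc k) a" by simp
    moreover have "(p ^^ k) a \<in> orbit ?q a" using Suc.prems by (intro Suc.hyps) simp
    ultimately show ?case by (metis orbit.step)
  qed
  ultimately have "?q ((p ^^ m') a) = b" using m' by simp
  moreover have "(p ^^ m') a \<in> orbit ?q a" using m' on_arc by simp
  ultimately have "b \<in> orbit ?q a" by (metis orbit.step)
  then show ?thesis
    using on_arc orbit_conv_funpow_dist1[OF a_in] m_def by auto
qed

lemma orbit_transpose_comp_merge:
  assumes "permutation p" "a \<noteq> b" "b \<notin> orbit p a"
  shows "orbit (transpose a b \<circ> p) y =
    (if y \<in> orbit p a \<union> orbit p b then orbit p a \<union> orbit p b else orbit p y)"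
proof -
  let ?q = "transpose a b \<circ> p"
  let ?U = "orbit p a \<union> orbit p b"
  have q: "permutation ?q" using assms(1) by (simp add: permutation_compose permutation_swap_id)
  have "a \<notin> orbit p b" using permutation_orbit_sym assms by metis
  then have "orbit p b \<subseteq> orbit (transpose b a \<circ> p) b"
    using insert_orbit_subset_orbit_transpose_comp[OF assms(1)] by blast
  then have "orbit p b \<subseteq> orbit ?q b"
    by (simp only: transpose_commute)
  moreover have a_part: "insert b (orbit p a) \<subseteq> orbit ?q a"
    using insert_orbit_subset_orbit_transpose_comp[OF assms(1,3)] .
  then have "orbit ?q b = orbit ?q a"
    using permutation_orbit_eq[OF q] by blast
  ultimately have "?U \<subseteq> orbit ?q a"
    using a_part by auto
  moreover have "orbit ?q a \<subseteq> ?U"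
  proof
    have ab: "a \<in> ?U" "b \<in> ?U" using permutation_self_in_orbit[OF assms(1)] by auto
    have closed: "?q z \<in> ?U" if "z \<in> ?U" for z
    proof -
      have "p z \<in> ?U" using that by (auto intro: orbit.step)
      then show ?thesis using ab by (cases "p z = a"; cases "p z = b") auto
    qed
    fix y assume "y \<in> orbit ?q a"
    then show "y \<in> ?U"
      by induct (use closed ab in auto)
  qed
  ultimately have qa: "orbit ?q a = ?U" by blast
  show ?thesis
  proof (cases "y \<in> ?U")
    case True
    then show ?thesis using qa permutation_orbit_eq[OF q] by auto
  next
    case False
    have "orbit ?q y = orbit p y"
    proof (rule orbit_cong)
      show "y \<in> orbit p y" using assms(1) by (rule permutation_self_in_orbit)
      fix s assume "s \<in> orbit p y"
      then have "p s \<in> orbit p y" by (rule orbit.step)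
      then have "p s \<noteq> a" "p s \<noteq> b" using False permutation_orbit_sym[OF assms(1)] by blast+
      then show "?q s = p s" by simp
    qed
    then show ?thesis using False by simp
  qed
qed

lemma orbit_subset_orbit_transpose_comp:
  assumes "permutation p" "a \<noteq> b" "b \<notin> orbit p a"
  shows "orbit p y \<subseteq> orbit (transpose a b \<circ> p) y"
  using orbit_transpose_comp_merge[OF assms, of y] permutation_orbit_eq[OF assms(1)]
  by (cases "y \<in> orbit p a \<union> orbit p b") auto

lemma mem_orbit_transpose_comp_iff:
  assumes "permutation p" "a \<noteq> b"
  shows "b \<in> orbit (transpose a b \<circ> p) a \<longleftrightarrow> b \<notin> orbit p a"
  using not_in_orbit_transpose_comp[OF assms] insert_orbit_subset_orbit_transpose_comp[OF assms(1)]
  by blast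

lemma card_orbits_transpose_comp_merge:
  assumes "p permutes S" "finite S" "a \<in> S" "b \<in> S" "a \<noteq> b" "b \<notin> orbit p a"
  shows "card (orbit (transpose a b \<circ> p) ` S) + 1 = card (orbit p ` S)"
proof -
  have p: "permutation p" using assms(1,2) permutation_permutes by blast
  let ?U = "orbit p a \<union> orbit p b"
  let ?rest = "orbit p ` (S - ?U)"
  note merge = orbit_transpose_comp_merge[OF p assms(5,6)]
  have self: "x \<in> orbit p x" for x using p by (rule permutation_self_in_orbit)
  have "orbit (transpose a b \<circ> p) ` S = insert ?U ?rest"
  proof
    show "orbit (transpose a b \<circ> p) ` S \<subseteq> insert ?U ?rest" using merge by auto
    have "?U \<in> orbit (transpose a b \<circ> p) ` S" using merge assms(3) self by (metis UnI1 imageI)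
    moreover have "?rest \<subseteq> orbit (transpose a b \<circ> p) ` S" using merge by force
    ultimately show "insert ?U ?rest \<subseteq> orbit (transpose a b \<circ> p) ` S" by blast
  qed
  moreover have "orbit p ` S = insert (orbit p a) (insert (orbit p b) ?rest)"
    using permutation_orbit_eq[OF p] assms(3,4) by blast
  moreover have "orbit p a \<noteq> orbit p b" using self assms(6) by metis
  moreover have "?U \<notin> ?rest" "orbit p a \<notin> ?rest" "orbit p b \<notin> ?rest"
    using self by blast+
  ultimately show ?thesis using assms(2) by (simp add: card_insert_disjoint)
qed

lemma card_orbits_transpose_comp:
  assumes "p permutes S" "finite S" "a \<in> S" "b \<in> S" "a \<noteq> b"
  shows "int (card (orbit (transpose a b \<circ> p) ` S)) =
    int (card (orbit p ` S)) + (if b \<in> orbit p a then 1 else - 1)"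
proof (cases "b \<in> orbit p a")
  case True
  let ?q = "transpose a b \<circ> p"
  have q: "?q permutes S" using assms by (simp add: permutes_compose permutes_swap_id)
  have "transpose a b \<circ> ?q = p" by (simp add: o_assoc)
  moreover have "b \<notin> orbit ?q a"
    using not_in_orbit_transpose_comp[OF _ assms(5) True] assms(1,2) permutation_permutes by blast
  ultimately have "card (orbit p ` S) + 1 = card (orbit ?q ` S)"
    using card_orbits_transpose_comp_merge[OF q assms(2-5)] by simp
  then show ?thesis using True by simp
next
  case False
  then show ?thesis using card_orbits_transpose_comp_merge[OF assms False] by simp
qed

lemma mem_orbit_transpose_comp_detach_iff:
  assumes "permutation p" "p x \<noteq> x" "u \<noteq> x" "z \<noteq> x"
  shows "z \<in> orbit (transpose x (p x) \<circ> p) u \<longleftrightarrow> z \<in> orbit p u"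
proof -
  let ?q = "transpose x (p x) \<circ> p"
  have q: "permutation ?q" using assms(1) by (simp add: permutation_compose permutation_swap_id)
  \<comment> \<open>q cuts x out of its p-cycle, and p is recovered by merging x back in\<close>
  have "?q x = x" by simp
  then have qx: "orbit ?q x = {x}" by (simp add: orbit_eq_singleton_iff)
  have "transpose x (p x) \<circ> ?q = p" by (simp add: o_assoc)
  then have merge: "orbit p u = (if u \<in> {x} \<union> orbit ?q (p x) then {x} \<union> orbit ?q (p x) else orbit ?q u)"
    using orbit_transpose_comp_merge[OF q, of x "p x" u] assms(2) qx by simp
  show ?thesis
  proof (cases "u \<in> orbit ?q (p x)")
    case True
    then show ?thesis using merge permutation_orbit_eq[OF q True] assms(4) by auto
  next
    case False
    then show ?thesis using merge assms(3) by simp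
  qed
qed

lemma evenperm_moves_outside_pair:
  assumes "permutation p" "evenperm p" "p \<noteq> id"
  obtains x where "x \<noteq> a" "x \<noteq> b" "p x \<noteq> x"
proof -
  have "\<not> p permutes {a, b}"
    using assms(2,3) by (auto simp: permutes_doubleton_iff evenperm_swap)
  moreover have "\<forall>y. \<exists>!x. p x = y"
    using permutation_bijective[OF assms(1)] by (simp add: bij_iff)
  ultimately show ?thesis using that unfolding permutes_def by blast
qed

lemma cyc_id: "cyc n id = n"
proof -
  have "orbit id ` {1..n} = (\<lambda>x. {x}) ` {1..n}"
    by (intro image_cong) (simp_all add: orbit_eq_singleton_iff)
  then show ?thesis unfolding cyc_def by (simp add: card_image)
qed

lemma cyc_le: "cyc n v \<le> n"
  unfolding cyc_def using card_image_le[of "{1..n}" "orbit v"] by simp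

lemma cyc_less_if_same_cycle:
  assumes "v permutes {1..n}" "n \<ge> 2" "(2::nat) \<in> orbit v 1"
  shows "cyc n v < n"
proof -
  have "permutation v" using assms(1) permutation_permutes by blast
  then have "orbit v 2 = orbit v 1" using assms(3) by (rule permutation_orbit_eq)
  then have "\<not> inj_on (orbit v) {1..n}"
    using assms(2) inj_onD[of "orbit v" "{1..n}" 2 1] by auto
  then show ?thesis
    using cyc_le[of n v] inj_on_iff_eq_card[of "{1..n}" "orbit v"] unfolding cyc_def by simp
qed

definition T_alt_weight :: "nat \<Rightarrow> (nat \<Rightarrow> nat) \<Rightarrow> int" where
  "T_alt_weight n v = int n - int (cyc n v) - of_bool ((2::nat) \<in> orbit v 1)"

lemma T_alt_weight_id: "T_alt_weight n id = 0"
proof -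
  have "orbit id (1::nat) = {1}" by (rule orbit_eq_singleton_iff[THEN iffD2]) simp
  then show ?thesis by (simp add: T_alt_weight_def cyc_id)
qed

lemma T_alt_weight_nonneg:
  assumes "v permutes {1..n}" "n \<ge> 2"
  shows "0 \<le> T_alt_weight n v"
  using cyc_le[of n v] cyc_less_if_same_cycle[OF assms] unfolding T_alt_weight_def by auto

lemma T_alt_memI:
  assumes "x \<in> {1..n}" "y \<in> {1..n}" "x \<noteq> y"
  shows "transpose 1 2 \<circ> transpose x y \<in> T_alt n"
proof -
  have "transpose x y = transpose (min x y) (max x y)"
    by (cases "x \<le> y") (auto simp: min_def max_def transpose_commute)
  moreover have "1 \<le> min x y" "min x y < max x y" "max x y \<le> n" using assms by auto
  ultimately show ?thesis
    unfolding T_alt_def by (intro CollectI exI[of _ "min x y"] exI[of _ "max x y"]) simp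
qed

lemma T_alt_permutes: "t \<in> T_alt n \<Longrightarrow> t permutes {1..n}"
  unfolding T_alt_def by (auto intro!: permutes_compose permutes_swap_id)

lemma T_alt_weight_comp_le:
  assumes "w permutes {1..n}" "t \<in> T_alt n"
  shows "T_alt_weight n (t \<circ> w) \<le> T_alt_weight n w + 1"
proof -
  let ?S = "{1..n::nat}"
  obtain i j where t: "t = transpose 1 2 \<circ> transpose i j" and ij: "1 \<le> i" "i < j" "j \<le> n"
    using assms(2) unfolding T_alt_def by blast
  define w' where "w' = transpose i j \<circ> w"
  have w': "w' permutes ?S" unfolding w'_def using assms(1) ij by (simp add: permutes_compose permutes_swap_id)
  have tw: "t \<circ> w = transpose 1 2 \<circ> w'" unfolding t w'_def by (simp add: o_assoc)
  have p: "permutation w" "permutation w'" using assms(1) w' permutation_permutes by blast+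
  have cyc_w': "int (cyc n w') = int (cyc n w) + (if j \<in> orbit w i then 1 else - 1)"
    unfolding cyc_def w'_def using card_orbits_transpose_comp[OF assms(1)] ij by simp
  have cyc_tw: "int (cyc n (t \<circ> w)) = int (cyc n w') + (if 2 \<in> orbit w' 1 then 1 else - 1)"
    unfolding cyc_def tw using card_orbits_transpose_comp[OF w'] ij by simp
  have joined: "2 \<in> orbit (t \<circ> w) 1 \<longleftrightarrow> 2 \<notin> orbit w' 1"
    unfolding tw using mem_orbit_transpose_comp_iff[OF p(2)] by simp
  \<comment> \<open>the case of two merges: cycles of w refine those of w'\<close>
  have "2 \<notin> orbit w 1" if "j \<notin> orbit w i" "2 \<notin> orbit w' 1"
    using orbit_subset_orbit_transpose_comp[OF p(1) _ that(1), of 1] that(2) ij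
    unfolding w'_def by auto
  then show ?thesis
    unfolding T_alt_weight_def using cyc_w' cyc_tw joined by (auto split: if_splits)
qed

lemma T_alt_weight_foldr_le:
  assumes "set ts \<subseteq> T_alt n"
  shows "T_alt_weight n (foldr (\<circ>) ts id) \<le> int (length ts)"
proof -
  have "foldr (\<circ>) ts id permutes {1..n} \<and> T_alt_weight n (foldr (\<circ>) ts id) \<le> int (length ts)"
    using assms
  proof (induction ts)
    case Nil
    have "foldr (\<circ>) [] id = (id :: nat \<Rightarrow> nat)" by simp
    then show ?case
      by (simp only: permutes_id T_alt_weight_id list.size of_nat_0 order_refl simp_thms)
  next
    case (Cons t ts)
    have t: "t \<in> T_alt n" and "set ts \<subseteq> T_alt n" using Cons.prems by simp_all
    note IH = conjunct1[OF Cons.IH[OF this(2)]] conjunct2[OF Cons.IH[OF this(2)]]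
    have "foldr (\<circ>) (t # ts) id = t \<circ> foldr (\<circ>) ts id" by simp
    then show ?case
      using permutes_compose[OF IH(1) T_alt_permutes[OF t]] T_alt_weight_comp_le[OF IH(1) t] IH(2)
      by (simp del: comp_apply id_apply)
  qed
  then show ?thesis ..
qed

lemma T_alt_weight_decrease:
  assumes "v \<in> alt_group n" "v \<noteq> id" "n \<ge> 2"
  obtains t w where "t \<in> T_alt n" "w \<in> alt_group n" "v = t \<circ> w"
    "T_alt_weight n w + 1 = T_alt_weight n v"
proof -
  let ?S = "{1..n::nat}"
  have v: "v permutes ?S" and ev: "evenperm v" using assms(1) unfolding alt_group_def by auto
  have pv: "permutation v" using v permutation_permutes by blast
  have S12: "1 \<in> ?S" "2 \<in> ?S" using assms(3) by auto
  obtain x where x: "x \<noteq> 1" "x \<noteq> 2" "v x \<noteq> x"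
    using evenperm_moves_outside_pair[OF pv ev assms(2)] by blast
  define w' where "w' = transpose 1 2 \<circ> v"
  define y where "y = w' x"
  define w where "w = transpose x y \<circ> w'"
  have w': "w' permutes ?S" unfolding w'_def using v S12 by (simp add: permutes_compose permutes_swap_id)
  have pw': "permutation w'" using w' permutation_permutes by blast
  have "x \<noteq> y" using x unfolding y_def w'_def by (metis comp_apply transpose_eq_iff)
  then have xy: "x \<in> ?S" "y \<in> ?S" "x \<noteq> y"
    using x permutes_not_in[OF v] permutes_in_image[OF w'] unfolding y_def by auto
  have w: "w permutes ?S" unfolding w_def using w' xy by (simp add: permutes_compose permutes_swap_id)
  have "evenperm w"
    unfolding w_def w'_def using pv ev xy(3)
    by (simp add: evenperm_comp permutation_compose permutation_swap_id evenperm_swap)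
  then have "w \<in> alt_group n" using w unfolding alt_group_def by simp
  moreover have "transpose 1 2 \<circ> transpose x y \<in> T_alt n" using T_alt_memI xy .
  moreover have "v = (transpose 1 2 \<circ> transpose x y) \<circ> w"
    unfolding w_def w'_def by (simp add: fun_eq_iff)
  moreover have "T_alt_weight n w + 1 = T_alt_weight n v"
  proof -
    have cyc_w': "int (cyc n w') = int (cyc n v) + (if 2 \<in> orbit v 1 then 1 else - 1)"
      unfolding cyc_def w'_def using card_orbits_transpose_comp[OF v _ S12] by simp
    have joined: "2 \<in> orbit w' 1 \<longleftrightarrow> 2 \<notin> orbit v 1"
      unfolding w'_def using mem_orbit_transpose_comp_iff[OF pv] by simp
    have "y \<in> orbit w' x" unfolding y_def by (rule orbit.base)
    then have cyc_w: "cyc n w = cyc n w' + 1"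
      unfolding cyc_def w_def using card_orbits_transpose_comp[OF w' finite_atLeastAtMost xy] by simp
    have "2 \<in> orbit w 1 \<longleftrightarrow> 2 \<in> orbit w' 1"
      unfolding w_def y_def using mem_orbit_transpose_comp_detach_iff[OF pw'] x xy(3)
      by (metis y_def)
    then show ?thesis
      unfolding T_alt_weight_def using cyc_w' joined cyc_w by auto
  qed
  ultimately show ?thesis using that by blast
qed

lemma T_alt_word_exists:
  assumes "v \<in> alt_group n" "n \<ge> 2"
  shows "\<exists>ts. length ts = nat (T_alt_weight n v) \<and> set ts \<subseteq> T_alt n \<and> v = foldr (\<circ>) ts id"
  using assms(1)
proof (induction "nat (T_alt_weight n v)" arbitrary: v)
  case 0
  have "v = id"
  proof (rule ccontr)
    assume "v \<noteq> id"
    then obtain t w where "w \<in> alt_group n" "T_alt_weight n w + 1 = T_alt_weight n v"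
      using T_alt_weight_decrease[OF 0(2) _ assms(2)] by blast
    then show False
      using 0(1) T_alt_weight_nonneg[OF _ assms(2), of w] unfolding alt_group_def by simp
  qed
  then have "length [] = nat (T_alt_weight n v)" "v = foldr (\<circ>) [] id"
    by (simp_all only: T_alt_weight_id) simp_all
  then show ?case by (metis empty_set empty_subsetI)
next
  case (Suc k)
  have "v \<noteq> id"
  proof
    assume "v = id"
    then show False using Suc(2) by (simp_all only: T_alt_weight_id)
  qed
  then obtain t w where tw: "t \<in> T_alt n" "w \<in> alt_group n" "v = t \<circ> w"
      "T_alt_weight n w + 1 = T_alt_weight n v"
    using T_alt_weight_decrease[OF Suc(3) _ assms(2)] by blast
  then have "k = nat (T_alt_weight n w)" using Suc(2) by linarith
  then obtain ts where "length ts = k" "set ts \<subseteq> T_alt n" "w = foldr (\<circ>) ts id"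
    using Suc(1) tw(2) by blast
  then show ?case using Suc(2) tw by (intro exI[of _ "t # ts"]) auto
qed

theorem corollary6p4:
  fixes n :: nat and v :: "nat \<Rightarrow> nat"
  assumes "n \<ge> 2" and "v \<in> alt_group n"
  shows "len_T n v = (if (2::nat) \<in> orbit v 1 then n - cyc n v - 1 else n - cyc n v)"
proof -
  have v: "v permutes {1..n}" using assms(2) unfolding alt_group_def by simp
  have "len_T n v = nat (T_alt_weight n v)"
    unfolding len_T_def
  proof (rule Least_equality)
    show "\<exists>ts. length ts = nat (T_alt_weight n v) \<and> set ts \<subseteq> T_alt n \<and> v = foldr (\<circ>) ts id"
      using T_alt_word_exists[OF assms(2,1)] .
    show "nat (T_alt_weight n v) \<le> k"
      if "\<exists>ts. length ts = k \<and> set ts \<subseteq> T_alt n \<and> v = foldr (\<circ>) ts id" for k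
      using that T_alt_weight_foldr_le by fastforce
  qed
  then show ?thesis
    using cyc_le[of n v] cyc_less_if_same_cycle[OF v assms(1)] unfolding T_alt_weight_def by auto
qed

end
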